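(* Fix a history of blocks $H$, and let $r\ge 0$ be the EIP-1559 burning fee per unit of size for the current slot. Consider the Double TFM with all transactions of the same size $s>0$. Assume (i) users cannot overbid, i.e. every bid $(\delta^{CM}_t,\delta^{BP}_t,c_t)$ satisfies $c_t\le v_t$; (ii) the burning fee is not excessively low, i.e. the total size of all transactions $t$ in the mempool with $v_t\ge r$ does not exceed the block capacity; and (iii) every includer and the block producer (of every type) follow the indicated allocation rules and add no fake transactions. Then for every user with value $v_t$, the bid $$b_t=(\delta^{CM}_t,\delta^{BP}_t,c_t)=\bigl(0,\ \mu^{Cost}_{BP},\ \min\{v_t,\ r+\mu^{Cost}_{BP}\}\bigr)$$ is a dominant strategy (it maximizes the user's utility for every choice of the other users' bids), irrespective of the user's beliefs about the other parties.
   Context: Model: in one slot there are users, $m$ includers with distinct orders $1,\dots,m$ (order $1$ is best), and one block producer. Each user has a transaction $t$ of size $s$ with private value $v_t$ per unit of size. An includer chooses an inclusion list (at most $c_{Incl}$ transactions) from the mempool; the block producer, seeing the inclusion lists, builds a block (at most $c_{block}$ transactions). Every transaction in the block pays the burning fee $r\cdot s$. The block producer incurs a cost $\mu^{Cost}_{BP}\ge 0$ per unit of size for every user transaction in its block; each includer incurs a cost $\mu^{Cost}_{CM}\ge0$ per unit of size for every user transaction in its list. Double TFM: a bid is $b_t=(\delta^{CM}_t,\delta^{BP}_t,c_t)$, where $c_t$ is the maximum total amount per unit of size the user pays. The block producer fee of $t$ is $\max\{\min\{\delta^{BP}_t s,\ c_t s-rs\},0\}$, paid to the block producer whenever $t$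 is in the block. The committee fee of $t$ is $\max\{\min\{\delta^{CM}_t s,\ c_t s-rs-\min\{\delta^{BP}_t s, c_t s-rs\}\},0\}$, paid entirely to the includer of smallest order that put $t$ in its inclusion list, and only if $t$ is in the block (otherwise not paid). A user whose transaction is in the (approved) block gets utility $(v_t - r)s$ minus the fees paid; otherwise utility $0$. Indicated allocation rules. Block producer: among transactions with $c_t\ge r+\mu^{Cost}_{BP}$ and $\delta^{BP}_t\ge \mu^{Cost}_{BP}$, include those with the highest block producer fee (deterministic tie-breaking) until the block is full or none remain. Includer of order $j$: compute the set $S$ of transactions the block producer following its rule would include; discard from $S$ transactions whose committee fee is below $\mu^{Cost}_{CM} s$; sort the rest by committee fee in decreasing order (deterministic tie-breaking); includers of order $1,2,\dots$ successively take the next $c_{Incl}$ transactions, and includer $j$ includes its block of positions $(j-1)c_{Incl}+1,\dots,j c_{Incl}$. *)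

theory Defs
  imports Main "HOL.Real"
begin

text \<open>A bid is a triple (delta_CM, delta_BP, c), all per unit of size.\<close>
type_synonym bid = "real \<times> real \<times> real"

definition bid_dCM :: "bid \<Rightarrow> real" where "bid_dCM b = fst b"
definition bid_dBP :: "bid \<Rightarrow> real" where "bid_dBP b = fst (snd b)"
definition bid_cap :: "bid \<Rightarrow> real" where "bid_cap b = snd (snd b)"

definition bp_fee :: "real \<Rightarrow> real \<Rightarrow> bid \<Rightarrow> real" where
  "bp_fee r s b = max (min (bid_dBP b * s) (bid_cap b * s - r * s)) 0"

definition cm_fee :: "real \<Rightarrow> real \<Rightarrow> bid \<Rightarrow> real" where
  "cm_fee r s b = max (min (bid_dCM b * s)
      (bid_cap b * s - r * s - min (bid_dBP b * s) (bid_cap b * s - r * s))) 0"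

definition beats :: "('a \<Rightarrow> real) \<Rightarrow> ('a \<Rightarrow> nat) \<Rightarrow> 'a \<Rightarrow> 'a \<Rightarrow> bool" where
  "beats key p x y \<longleftrightarrow> key x > key y \<or> (key x = key y \<and> p x < p y)"

definition rank_pos :: "'a set \<Rightarrow> ('a \<Rightarrow> bool) \<Rightarrow> ('a \<Rightarrow> real) \<Rightarrow> ('a \<Rightarrow> nat) \<Rightarrow> 'a \<Rightarrow> nat" where
  "rank_pos A P key p y = card {u \<in> A. P u \<and> beats key p u y}"

text \<open>Block producer's indicated rule: among eligible transactions, greedily take
  those with the highest block producer fee until the block (capacity cblock
  transactions) is full.  Tie-breaking is deterministic, given by an injective
  priority that may depend on the bid profile.\<close>
definition bp_eligible :: "real \<Rightarrow> real \<Rightarrow> bid \<Rightarrow> bool" where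
  "bp_eligible r muBP b \<longleftrightarrow> bid_cap b \<ge> r + muBP \<and> bid_dBP b \<ge> muBP"

definition bp_block :: "'a set \<Rightarrow> real \<Rightarrow> real \<Rightarrow> real \<Rightarrow> nat \<Rightarrow>
    (('a \<Rightarrow> bid) \<Rightarrow> 'a \<Rightarrow> nat) \<Rightarrow> ('a \<Rightarrow> bid) \<Rightarrow> 'a set" where
  "bp_block T r s muBP cblock prioBP b =
     {t \<in> T. bp_eligible r muBP (b t) \<and>
        rank_pos T (\<lambda>u. bp_eligible r muBP (b u)) (\<lambda>u. bp_fee r s (b u)) (prioBP b) t < cblock}"

text \<open>Includers' indicated rule: S = the block the producer would build; keep those
  with committee fee at least muCM * s; sort by committee fee (decreasing,
  deterministic tie-breaking); includer j (1 \<le> j \<le> m) takes positions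
  (j-1)*cIncl+1, ..., j*cIncl (here 0-based: (j-1)*cIncl \<le> pos < j*cIncl).\<close>
definition incl_list :: "'a set \<Rightarrow> real \<Rightarrow> real \<Rightarrow> real \<Rightarrow> real \<Rightarrow> nat \<Rightarrow> nat \<Rightarrow>
    (('a \<Rightarrow> bid) \<Rightarrow> 'a \<Rightarrow> nat) \<Rightarrow> (('a \<Rightarrow> bid) \<Rightarrow> 'a \<Rightarrow> nat) \<Rightarrow> ('a \<Rightarrow> bid) \<Rightarrow> nat \<Rightarrow> 'a set" where
  "incl_list T r s muBP muCM cblock cIncl prioBP prioCM b j =
     (let S = bp_block T r s muBP cblock prioBP b;
          P = (\<lambda>u. cm_fee r s (b u) \<ge> muCM * s);
          pos = rank_pos S P (\<lambda>u. cm_fee r s (b u)) (prioCM b)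
      in {t \<in> S. P t \<and> (j - 1) * cIncl \<le> pos t \<and> pos t < j * cIncl})"

definition user_utility :: "'a set \<Rightarrow> real \<Rightarrow> real \<Rightarrow> real \<Rightarrow> real \<Rightarrow> nat \<Rightarrow> nat \<Rightarrow> nat \<Rightarrow>
    (('a \<Rightarrow> bid) \<Rightarrow> 'a \<Rightarrow> nat) \<Rightarrow> (('a \<Rightarrow> bid) \<Rightarrow> 'a \<Rightarrow> nat) \<Rightarrow>
    ('a \<Rightarrow> real) \<Rightarrow> ('a \<Rightarrow> bid) \<Rightarrow> 'a \<Rightarrow> real" where
  "user_utility T r s muBP muCM cblock cIncl m prioBP prioCM v b t =
     (if t \<in> bp_block T r s muBP cblock prioBP b then
        (v t - r) * s - bp_fee r s (b t)
          - (if (\<exists>j\<in>{1..m}. t \<in> incl_list T r s muBP muCM cblock cIncl prioBP prioCM b j)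
             then cm_fee r s (b t) else 0)
      else 0)"

end

theory Submission
  imports Defs
begin

text \<open>A transaction in the block pays the producer at least its cost \<open>muBP\<close> per unit of size,
  so no bid earns the user more than \<open>max 0 ((v t - r - muBP) * s)\<close>. The indicated bid
  attains this bound: without overbidding, every transaction eligible for the producer has
  value at least \<open>r\<close>, so by the capacity assumption all eligible transactions fit into the
  block; hence the user's transaction is included exactly when \<open>v t \<ge> r + muBP\<close>, and then
  pays \<open>r + muBP\<close> per unit and no committee fee.\<close>

lemma cm_fee_nonneg: "cm_fee r s b \<ge> 0"
  by (simp add: cm_fee_def)

lemma cm_fee_zero_dCM: "cm_fee r s (0, d, c) = 0"
  by (simp add: cm_fee_def bid_dCM_def)

lemma bp_fee_ge_cost:
  assumes "bp_eligible r muBP b" and "s > 0"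
  shows "bp_fee r s b \<ge> muBP * s"
proof -
  have "muBP * s \<le> bid_dBP b * s" and "muBP * s \<le> bid_cap b * s - r * s"
    using assms by (auto simp: bp_eligible_def left_diff_distrib[symmetric])
  then show ?thesis
    by (simp add: bp_fee_def)
qed

lemma bp_fee_cost_bid:
  assumes "muBP \<ge> 0" and "s \<ge> 0"
  shows "bp_fee r s (d, muBP, r + muBP) = muBP * s"
  using assms by (simp add: bp_fee_def bid_dBP_def bid_cap_def algebra_simps)

lemma user_utility_le_net_surplus:
  assumes "s > 0"
  shows "user_utility T r s muBP muCM cblock cIncl m prioBP prioCM v b t
           \<le> max 0 ((v t - r - muBP) * s)"
proof (cases "t \<in> bp_block T r s muBP cblock prioBP b")
  case True
  then have "bp_fee r s (b t) \<ge> muBP * s"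
    using assms by (intro bp_fee_ge_cost) (auto simp: bp_block_def)
  then show ?thesis
    using True cm_fee_nonneg[of r s "b t"] by (auto simp: user_utility_def algebra_simps)
qed (simp add: user_utility_def)

lemma rank_pos_less_card:
  assumes "finite A" and "y \<in> A" and "P y"
  shows "rank_pos A P key p y < card {u \<in> A. P u}"
  unfolding rank_pos_def
  using assms by (intro psubset_card_mono) (auto simp: beats_def)

lemma eligible_in_bp_block:
  assumes "finite T" and "t \<in> T" and "bp_eligible r muBP (b t)"
    and "card {u \<in> T. bp_eligible r muBP (b u)} \<le> cblock"
  shows "t \<in> bp_block T r s muBP cblock prioBP b"
  using order_less_le_trans[OF rank_pos_less_card assms(4)] assms(1-3)
  by (simp add: bp_block_def)

lemma card_eligible_le_capacity:
  assumes "finite T" and "muBP \<ge> 0" and "s > 0"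
    and no_overbid: "\<forall>u \<in> T. bid_cap (b u) \<le> v u"
    and not_low: "(\<Sum>u \<in> {u \<in> T. v u \<ge> r}. s) \<le> real cblock * s"
  shows "card {u \<in> T. bp_eligible r muBP (b u)} \<le> cblock"
proof -
  have "{u \<in> T. bp_eligible r muBP (b u)} \<subseteq> {u \<in> T. v u \<ge> r}"
    using no_overbid \<open>muBP \<ge> 0\<close> by (force simp: bp_eligible_def)
  then have "card {u \<in> T. bp_eligible r muBP (b u)} \<le> card {u \<in> T. v u \<ge> r}"
    using \<open>finite T\<close> by (intro card_mono) auto
  also have "card {u \<in> T. v u \<ge> r} \<le> cblock"
    using not_low \<open>s > 0\<close> by simp
  finally show ?thesis .
qed

lemma user_utility_indicated_bid:
  assumes "finite T" and "t \<in> T" and "muBP \<ge> 0" and "s > 0"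
    and no_overbid_others: "\<forall>u \<in> T - {t}. bid_cap (b u) \<le> v u"
    and not_low: "(\<Sum>u \<in> {u \<in> T. v u \<ge> r}. s) \<le> real cblock * s"
  shows "user_utility T r s muBP muCM cblock cIncl m prioBP prioCM v
           (b(t := (0, muBP, min (v t) (r + muBP)))) t = max 0 ((v t - r - muBP) * s)"
proof (cases "v t \<ge> r + muBP")
  case True
  define b0 where "b0 = b(t := (0, muBP, r + muBP))"
  have "bp_eligible r muBP (b0 t)"
    by (simp add: b0_def bp_eligible_def bid_cap_def bid_dBP_def)
  moreover have "\<forall>u \<in> T. bid_cap (b0 u) \<le> v u"
    using True no_overbid_others by (simp add: b0_def bid_cap_def)
  ultimately have "t \<in> bp_block T r s muBP cblock prioBP b0"
    using assms by (intro eligible_in_bp_block card_eligible_le_capacity) auto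
  moreover have "bp_fee r s (b0 t) = muBP * s" and "cm_fee r s (b0 t) = 0"
    using assms by (simp_all add: b0_def bp_fee_cost_bid cm_fee_zero_dCM)
  moreover have "b0 = b(t := (0, muBP, min (v t) (r + muBP)))"
    using True by (simp add: b0_def)
  moreover have "max 0 ((v t - r - muBP) * s) = (v t - r - muBP) * s"
    using True \<open>s > 0\<close> by simp
  ultimately show ?thesis
    by (simp add: user_utility_def algebra_simps)
next
  case False
  then show ?thesis
    using \<open>s > 0\<close> by (auto simp: user_utility_def bp_block_def bp_eligible_def bid_cap_def
        mult_le_0_iff)
qed

theorem mainTheorem1:
  fixes T :: "'a set" and r s muBP muCM :: real and cblock cIncl m :: nat
    and prioBP prioCM :: "('a \<Rightarrow> bid) \<Rightarrow> 'a \<Rightarrow> nat"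
    and v :: "'a \<Rightarrow> real" and b :: "'a \<Rightarrow> bid" and t :: 'a and b' :: bid
  assumes "finite T" and "t \<in> T"
    and "r \<ge> 0" and "s > 0" and "muBP \<ge> 0" and "muCM \<ge> 0"
    and "\<And>bb. inj_on (prioBP bb) T" and "\<And>bb. inj_on (prioCM bb) T"
    and no_overbid_others: "\<forall>u \<in> T - {t}. bid_cap (b u) \<le> v u"
    and no_overbid_dev: "bid_cap b' \<le> v t"
    and not_low: "(\<Sum>u \<in> {u \<in> T. v u \<ge> r}. s) \<le> real cblock * s"
  shows "user_utility T r s muBP muCM cblock cIncl m prioBP prioCM v
            (b(t := (0, muBP, min (v t) (r + muBP)))) t
         \<ge> user_utility T r s muBP muCM cblock cIncl m prioBP prioCM v (b(t := b')) t"
  using user_utility_le_net_surplus[OF \<open>s > 0\<close>]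
    user_utility_indicated_bid[OF \<open>finite T\<close> \<open>t \<in> T\<close> \<open>muBP \<ge> 0\<close> \<open>s > 0\<close> no_overbid_others
      not_low]
  by simp

end
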